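(* Let $I_3:=\bigcup_{i=0}^{3}L_i^{(9-i)}$ and $r:=\dot E/E+\tfrac{4}{3z}$, evaluated along solutions of the Boutroux–Painlevé system. For every $\epsilon>0$ there exists a neighbourhood $U$ of $I_3$ in $\mathcal S$ such that $|r|<\epsilon$ in $U$, for all $z\in\mathbb C\setminus\{0\}$. For every compact subset $K$ of $(L_4^{(5)}\setminus L_5^{(4)})\cup(L_7^{(2)}\setminus L_8^{(1)})$ there exist a neighbourhood $V$ of $K$ in $S_9$ and a constant $C>0$ such that $|3z\dot E/(4E)|\le C$ in $V$ for all $z\in\mathbb C\setminus\{0\}$.
   Context: Fix $\alpha\in\mathbb C$. Boutroux–Painlevé system: $\dot u=v-u^2-\tfrac12-\tfrac{u}{3z}$, $\dot v=2uv+\tfrac{2\alpha+1}{3z}-\tfrac{2v}{3z}$; energy $E=v^2/2-u^2v-v/2$, so that $\dot E=-\tfrac{4E}{3z}+\tfrac{4\alpha v-(2\alpha+1)(2u^2+1)}{6z}$, a rational function on the surface. Okamoto space: start from $\mathbb P^2(\mathbb C)$ with charts $(u,v)$, $(u_{01},v_{01})=(1/u,v/u)$, $(u_{02},v_{02})=(u/v,1/v)$; line at infinity $L_0$. Blowing up a point $(a,b)$ in a chart $(s,t)$ creates an exceptional line with charts $s=a+s_1t_1,\ t=b+t_1$ and $s=a+s_2,\ t=b+s_2t_2$. Nine blow-ups: $b_0:(u_{02},v_{02})=(0,0)\to L_1$; $b_1:(u_{12},v_{12})=(0,0)\to L_2$; $b_2:(u_{21},v_{21})=(1/2,0)\to L_3$;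 $b_3:(u_{31},v_{31})=(0,0)\to L_4$; $b_4:(u_{41},v_{41})=(-1/4,0)\to L_5$; $b_5:(u_{51},v_{51})=(\tfrac{1-2\alpha}{12z},0)\to L_6$; $b_6:(u_{01},v_{01})=(0,0)\to L_7$; $b_7:(u_{72},v_{72})=(0,0)\to L_8$; $b_8:(u_{82},v_{82})=(0,-\tfrac{1+2\alpha}{3z})\to L_9$, where blowing up produces charts $(u_{i1},v_{i1})$ (first type) and $(u_{i2},v_{i2})$ (second type) with $i$ the index of the new line. This gives $S_9(z)$; $L_i^{(9-i)}$ is the proper transform of $L_i$. $\mathcal S$ is the bundle of the surfaces $S_9(z)$ over $z\in\mathbb C\setminus\{0\}$. *)

theory Defs
  imports "HOL-Analysis.Analysis"
begin

definition BP_E :: "complex \<Rightarrow> complex \<Rightarrow> complex" where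
  "BP_E u v = v^2/2 - u^2 * v - v/2"

definition BP_udot :: "complex \<Rightarrow> complex \<Rightarrow> complex \<Rightarrow> complex" where
  "BP_udot z u v = v - u^2 - 1/2 - u/(3*z)"

definition BP_vdot :: "complex \<Rightarrow> complex \<Rightarrow> complex \<Rightarrow> complex \<Rightarrow> complex" where
  "BP_vdot \<alpha> z u v = 2* u* v + (2*\<alpha>+1)/(3*z) - 2* v/(3*z)"

text \<open>Derivative of E along solutions (chain rule: E_u = -2uv, E_v = v - u^2 - 1/2).\<close>
definition BP_Edot :: "complex \<Rightarrow> complex \<Rightarrow> complex \<Rightarrow> complex \<Rightarrow> complex" where
  "BP_Edot \<alpha> z u v = (-2* u* v) * BP_udot z u v + (v - u^2 - 1/2) * BP_vdot \<alpha> z u v"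

definition BP_r :: "complex \<Rightarrow> complex \<Rightarrow> complex \<Rightarrow> complex \<Rightarrow> complex" where
  "BP_r \<alpha> z u v = BP_Edot \<alpha> z u v / BP_E u v + 4/(3*z)"

text \<open>Blow-up of the point (a,b): first-type chart s = a + s1 t1, t = b + t1;
  second-type chart s = a + s2, t = b + s2 t2.\<close>
fun bu1 :: "complex \<times> complex \<Rightarrow> complex \<times> complex \<Rightarrow> complex \<times> complex" where
  "bu1 (a,b) (s,t) = (a + s*t, b + t)"
fun bu2 :: "complex \<times> complex \<Rightarrow> complex \<times> complex \<Rightarrow> complex \<times> complex" where
  "bu2 (a,b) (s,t) = (a + s, b + s*t)"

text \<open>From the charts (u01,v01) = (1/u, v/u) and (u02,v02) = (u/v, 1/v) to the
  affine chart (u,v); None means the point lies on the line at infinity / exceptional lines.\<close>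
fun aff01 :: "complex \<times> complex \<Rightarrow> (complex \<times> complex) option" where
  "aff01 (a,b) = (if a = 0 then None else Some (1/a, b/a))"
fun aff02 :: "complex \<times> complex \<Rightarrow> (complex \<times> complex) option" where
  "aff02 (a,b) = (if b = 0 then None else Some (a/b, 1/b))"

datatype okchart = C01 | C71 | C11 | C21 | C22 | C31 | C32 | C41 | C42

text \<open>Coordinate map of each chart down to the affine (u,v)-chart.
  b0: (u02,v02)=(0,0); b1: (u12,v12)=(0,0); b2: (u21,v21)=(1/2,0);
  b3: (u31,v31)=(0,0); b6: (u01,v01)=(0,0).\<close>
definition to02_21 :: "complex \<times> complex \<Rightarrow> complex \<times> complex" where
  "to02_21 p = bu2 (0,0) (bu1 (0,0) p)"
definition to02_31 :: "complex \<times> complex \<Rightarrow> complex \<times> complex" where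
  "to02_31 p = to02_21 (bu1 (1/2,0) p)"

fun to02 :: "okchart \<Rightarrow> complex \<times> complex \<Rightarrow> complex \<times> complex" where
  "to02 C11 p = bu1 (0,0) p"
| "to02 C21 p = to02_21 p"
| "to02 C22 p = bu2 (0,0) (bu2 (0,0) p)"
| "to02 C31 p = to02_31 p"
| "to02 C32 p = to02_21 (bu2 (1/2,0) p)"
| "to02 C41 p = to02_31 (bu1 (0,0) p)"
| "to02 C42 p = to02_31 (bu2 (0,0) p)"
| "to02 _ p = p"

fun chart_uv :: "okchart \<Rightarrow> complex \<times> complex \<Rightarrow> (complex \<times> complex) option" where
  "chart_uv C01 p = aff01 p"
| "chart_uv C71 p = aff01 (bu1 (0,0) p)"
| "chart_uv c p = aff02 (to02 c p)"

text \<open>Domain of each chart inside S_9(z): the chart plane minus the centre of a later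
  blow-up lying in it (b6 in chart 01, b2 in charts 21/22, b3 in chart 31,
  b4 in charts 41/42; all other centres are not in these charts).\<close>
fun okdom :: "okchart \<Rightarrow> (complex \<times> complex) set" where
  "okdom C01 = - {(0,0)}"
| "okdom C21 = - {(1/2,0)}"
| "okdom C22 = - {(0,2)}"
| "okdom C31 = - {(0,0)}"
| "okdom C41 = - {(-1/4,0)}"
| "okdom C42 = - {(0,-4)}"
| "okdom _ = UNIV"

text \<open>I_3 = L_0^(9) u L_1^(8) u L_2^(7) u L_3^(6), described chart by chart
  (the pieces cover I_3 and each lies in I_3).\<close>
fun I3_piece :: "okchart \<Rightarrow> (complex \<times> complex) set" where
  "I3_piece C01 = {(0,w) | w. w \<noteq> 0}"                        \<comment> \<open>L0\<close>
| "I3_piece C71 = {(0,w) | w. True}"                            \<comment> \<open>L0\<close>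
| "I3_piece C11 = {(w,0) | w. True}"                            \<comment> \<open>L1\<close>
| "I3_piece C21 = {(0,w) | w. True} \<union> {(w,0) | w. w \<noteq> 1/2}"   \<comment> \<open>L1, L2\<close>
| "I3_piece C22 = {(w,0) | w. True} \<union> {(0,w) | w. w \<noteq> 2}"     \<comment> \<open>L0, L2\<close>
| "I3_piece C31 = {(w,0) | w. w \<noteq> 0}"                        \<comment> \<open>L3\<close>
| "I3_piece C32 = {(w,0) | w. True} \<union> {(0,w) | w. True}"       \<comment> \<open>L2, L3\<close>
| "I3_piece C42 = {(w,0) | w. True}"                            \<comment> \<open>L3\<close>
| "I3_piece C41 = {}"

definition gen_pts :: "okchart \<Rightarrow> (complex \<times> complex) set \<Rightarrow> (complex \<times> complex) set" where
  "gen_pts c S = {uv. \<exists>p\<in>S. chart_uv c p = Some uv \<and> BP_E (fst uv) (snd uv) \<noteq> 0}"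

end

theory Submission
  imports Defs
begin

text \<open>Along solutions \<open>E' = -4E/(3z) + N/(6z)\<close> with \<open>N = 4\<alpha>v - (2\<alpha>+1)(2u\<^sup>2+1)\<close>, so
  \<open>r = N/(6zE)\<close> and \<open>3zE'/(4E) = -1 + N/(8E)\<close>. In every chart of \<open>S\<^sub>9\<close> the pullbacks of
  \<open>E\<close> and \<open>N\<close>, multiplied by a common weight clearing their poles along the exceptional
  lines, become polynomials; hence \<open>N/E\<close> is a ratio of polynomials in the chart coordinates.
  On \<open>I\<^sub>3\<close> the numerator vanishes while the denominator does not, which makes
  \<open>|N| < 6\<epsilon>|z||E|\<close> an open neighbourhood of \<open>I\<^sub>3\<close> on which \<open>|r| < \<epsilon>\<close>. Away from
  \<open>L\<^sub>5\<close> and \<open>L\<^sub>8\<close> the denominator is nonzero on \<open>L\<^sub>4\<close> and \<open>L\<^sub>7\<close>, so on compact pieces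
  the ratio is bounded, and stays bounded on a neighbourhood.\<close>

definition BP_N :: "complex \<Rightarrow> complex \<Rightarrow> complex \<Rightarrow> complex" where
  "BP_N \<alpha> u v = 4 * \<alpha> * v - (2 * \<alpha> + 1) * (2 * u^2 + 1)"

lemma BP_Edot_eq:
  assumes "z \<noteq> 0"
  shows "BP_Edot \<alpha> z u v = -4 * BP_E u v / (3 * z) + BP_N \<alpha> u v / (6 * z)"
  using assms
  by (simp add: BP_Edot_def BP_E_def BP_N_def BP_udot_def BP_vdot_def field_simps) algebra

lemma BP_r_eq:
  assumes "z \<noteq> 0" "BP_E u v \<noteq> 0"
  shows "BP_r \<alpha> z u v = BP_N \<alpha> u v / BP_E u v / (6 * z)"
  using assms by (simp add: BP_r_def BP_Edot_eq field_simps)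

lemma BP_Edot_scaled_eq:
  assumes "z \<noteq> 0" "BP_E u v \<noteq> 0"
  shows "3 * z * BP_Edot \<alpha> z u v / (4 * BP_E u v) = -1 + BP_N \<alpha> u v / BP_E u v / 8"
  using assms by (simp add: BP_Edot_eq field_simps)

fun chart_weight :: "okchart \<Rightarrow> complex \<times> complex \<Rightarrow> complex" where
  "chart_weight C01 (s,t) = s^3"
| "chart_weight C71 (s,t) = s^3 * t^2"
| "chart_weight C11 (s,t) = t^2"
| "chart_weight C21 (s,t) = s^2 * t^4"
| "chart_weight C22 (s,t) = s^4 * t^3"
| "chart_weight C31 (s,t) = (1/2 + s * t)^2 * t^3"
| "chart_weight C32 (s,t) = (1/2 + s)^2 * s^3 * t^4"
| "chart_weight C41 (s,t) = (1/2 + s * t^2)^2 * t^2"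
| "chart_weight C42 (s,t) = (1/2 + s^2 * t)^2 * s^2 * t^3"

fun chart_E :: "okchart \<Rightarrow> complex \<times> complex \<Rightarrow> complex" where
  "chart_E C01 (s,t) = t^2 * s / 2 - t - s^2 * t / 2"
| "chart_E C71 (s,t) = s * t^2 / 2 - 1 - s^2 * t^2 / 2"
| "chart_E C11 (s,t) = 1 / 2 - s^2 * t - t / 2"
| "chart_E C21 (s,t) = 1 / 2 - s - s * t^2 / 2"
| "chart_E C22 (s,t) = t / 2 - 1 - s^2 * t^2 / 2"
| "chart_E C31 (s,t) = -s - (1/2 + s * t) * t / 2"
| "chart_E C32 (s,t) = -1 - (1/2 + s) * s * t^2 / 2"
| "chart_E C41 (s,t) = -(s + (1/2 + s * t^2) / 2)"
| "chart_E C42 (s,t) = -(1 + (1/2 + s^2 * t) * t / 2)"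

fun chart_N :: "complex \<Rightarrow> okchart \<Rightarrow> complex \<times> complex \<Rightarrow> complex" where
  "chart_N \<alpha> C01 (s,t) = 4 * \<alpha> * t * s^2 - (2 * \<alpha> + 1) * (2 * s + s^3)"
| "chart_N \<alpha> C71 (s,t) = 4 * \<alpha> * s^2 * t^2 - (2 * \<alpha> + 1) * (2 * s + s^3 * t^2)"
| "chart_N \<alpha> C11 (s,t) = 4 * \<alpha> * t - (2 * \<alpha> + 1) * (2 * s^2 + 1) * t^2"
| "chart_N \<alpha> C21 (s,t) = 4 * \<alpha> * s * t^2 - (2 * \<alpha> + 1) * (2 * s^2 * t^2 + s^2 * t^4)"
| "chart_N \<alpha> C22 (s,t) = 4 * \<alpha> * s^2 * t^2 - (2 * \<alpha> + 1) * (2 * s^2 * t + s^4 * t^3)"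
| "chart_N \<alpha> C31 (s,t) = 4 * \<alpha> * (1/2 + s * t) * t
      - (2 * \<alpha> + 1) * (2 * (1/2 + s * t)^2 * t + (1/2 + s * t)^2 * t^3)"
| "chart_N \<alpha> C32 (s,t) = 4 * \<alpha> * (1/2 + s) * s * t^2
      - (2 * \<alpha> + 1) * (2 * (1/2 + s)^2 * s * t^2 + (1/2 + s)^2 * s^3 * t^4)"
| "chart_N \<alpha> C41 (s,t) = 4 * \<alpha> * (1/2 + s * t^2)
      - (2 * \<alpha> + 1) * (2 * (1/2 + s * t^2)^2 + (1/2 + s * t^2)^2 * t^2)"
| "chart_N \<alpha> C42 (s,t) = t * (4 * \<alpha> * (1/2 + s^2 * t)
      - (2 * \<alpha> + 1) * (2 * (1/2 + s^2 * t)^2 + (1/2 + s^2 * t)^2 * s^2 * t^2))"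

lemma chart_pullback:
  assumes "chart_uv c (s, t) = Some (u, v)"
  shows "chart_weight c (s, t) \<noteq> 0 \<and> chart_E c (s, t) = BP_E u v * chart_weight c (s, t)
         \<and> chart_N \<alpha> c (s, t) = BP_N \<alpha> u v * chart_weight c (s, t)"
proof (cases c)
  case C01
  with assms have nz: "s \<noteq> 0" and u: "u = 1/s" and v: "v = t/s"
    by (auto split: if_splits)
  show ?thesis
    using nz unfolding u v C01 by (simp add: BP_E_def BP_N_def field_simps) algebra
next
  case C71
  with assms have nz: "s \<noteq> 0" "t \<noteq> 0" and u: "u = 1/(s*t)" and v: "v = 1/s"
    by (auto split: if_splits)
  show ?thesis
    using nz unfolding u v C71 by (simp add: BP_E_def BP_N_def field_simps) algebra
next
  case C11
  with assms have nz: "t \<noteq> 0" and u: "u = s" and v: "v = 1/t"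
    by (auto split: if_splits)
  show ?thesis
    using nz unfolding u v C11 by (simp add: BP_E_def BP_N_def field_simps) algebra
next
  case C21
  with assms have nz: "s \<noteq> 0" "t \<noteq> 0" and u: "u = 1/t" and v: "v = 1/(s*t^2)"
    by (auto simp: to02_21_def power2_eq_square split: if_splits)
  show ?thesis
    using nz unfolding u v C21 by (simp add: BP_E_def BP_N_def field_simps) algebra
next
  case C22
  with assms have nz: "s \<noteq> 0" "t \<noteq> 0" and u: "u = 1/(s*t)" and v: "v = 1/(s^2*t)"
    by (auto simp: power2_eq_square split: if_splits)
  show ?thesis
    using nz unfolding u v C22 by (simp add: BP_E_def BP_N_def field_simps) algebra
next
  case C31
  \<comment> \<open>\<open>algebra\<close> works in rings, so the factor \<open>1/2 + s t\<close> of the weight is kept as a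
    variable \<open>S\<close> tied to \<open>s\<close>, \<open>t\<close> by a division-free equation; likewise below.\<close>
  define S where "S = 1/2 + s*t"
  from assms S_def C31 have nz: "S \<noteq> 0" "t \<noteq> 0" and u: "u = 1/t" and v: "v = 1/(S*t^2)"
    by (auto simp: to02_31_def to02_21_def power2_eq_square mult.assoc split: if_splits)
  have S: "2 * S = 1 + 2 * s * t" by (simp add: S_def)
  show ?thesis
    using nz unfolding u v C31 chart_E.simps chart_N.simps chart_weight.simps S_def[symmetric]
    by (simp add: BP_E_def BP_N_def field_simps) (use S in algebra)
next
  case C32
  define S where "S = 1/2 + s"
  from assms S_def C32 have nz: "S \<noteq> 0" "s \<noteq> 0" "t \<noteq> 0"
    and u: "u = 1/(s*t)" and v: "v = 1/(S * s\<^sup>2 * t\<^sup>2)"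
    by (auto simp: to02_21_def power2_eq_square split: if_splits)
  have S: "2 * S = 1 + 2 * s" by (simp add: S_def)
  show ?thesis
    using nz unfolding u v C32 chart_E.simps chart_N.simps chart_weight.simps S_def[symmetric]
    by (simp add: BP_E_def BP_N_def field_simps) (use S in algebra)
next
  case C41
  define S where "S = 1/2 + s*t^2"
  from assms S_def C41 have nz: "S \<noteq> 0" "t \<noteq> 0" and u: "u = 1/t" and v: "v = 1/(S*t^2)"
    by (auto simp: to02_31_def to02_21_def power2_eq_square mult.assoc split: if_splits)
  have S: "2 * S = 1 + 2 * s * t^2" by (simp add: S_def)
  show ?thesis
    using nz unfolding u v C41 chart_E.simps chart_N.simps chart_weight.simps S_def[symmetric]
    by (simp add: BP_E_def BP_N_def field_simps) (use S in algebra)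
next
  case C42
  define S where "S = 1/2 + s^2*t"
  from assms S_def C42 have nz: "S \<noteq> 0" "s \<noteq> 0" "t \<noteq> 0"
    and u: "u = 1/(s*t)" and v: "v = 1/(S * s\<^sup>2 * t\<^sup>2)"
    by (auto simp: to02_31_def to02_21_def power2_eq_square mult.assoc split: if_splits)
  have S: "2 * S = 1 + 2 * s^2 * t" by (simp add: S_def)
  show ?thesis
    using nz unfolding u v C42 chart_E.simps chart_N.simps chart_weight.simps S_def[symmetric]
    by (simp add: BP_E_def BP_N_def field_simps) (use S in algebra)
qed

lemma chart_ratio:
  assumes "chart_uv c p = Some (u, v)" "BP_E u v \<noteq> 0"
  shows "chart_E c p \<noteq> 0" "BP_N \<alpha> u v / BP_E u v = chart_N \<alpha> c p / chart_E c p"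
proof -
  obtain s t where p: "p = (s, t)" by fastforce
  from chart_pullback[of c s t u v \<alpha>] assms show "chart_E c p \<noteq> 0"
    "BP_N \<alpha> u v / BP_E u v = chart_N \<alpha> c p / chart_E c p"
    unfolding p by simp_all
qed

lemma continuous_on_chart_E: "continuous_on UNIV (chart_E c)"
proof -
  have "continuous_on UNIV (\<lambda>(s, t). chart_E c (s, t))"
    by (cases c) (simp_all add: case_prod_unfold continuous_intros)
  then show ?thesis by simp
qed

lemma continuous_on_chart_N: "continuous_on UNIV (chart_N \<alpha> c)"
proof -
  have "continuous_on UNIV (\<lambda>(s, t). chart_N \<alpha> c (s, t))"
    by (cases c) (simp_all add: case_prod_unfold continuous_intros)
  then show ?thesis by simp
qed

lemma open_okdom: "open (okdom c)"
  by (cases c) (simp_all add: open_Compl)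

lemma chart_on_I3_piece:
  assumes "p \<in> I3_piece c"
  shows "p \<in> okdom c" "chart_N \<alpha> c p = 0" "chart_E c p \<noteq> 0"
  using assms by (cases c; auto)+

lemma compact_norm_ratio_bound:
  fixes F G :: "'a::topological_space \<Rightarrow> 'b::real_normed_field"
  assumes "compact K" "continuous_on K F" "continuous_on K G" "\<forall>p\<in>K. G p \<noteq> 0"
  obtains M where "M > 0" "\<forall>p\<in>K. norm (F p) < M * norm (G p)"
proof -
  have "compact ((\<lambda>p. F p / G p) ` K)"
    using assms by (intro compact_continuous_image continuous_on_divide) auto
  then obtain B where "\<forall>x \<in> (\<lambda>p. F p / G p) ` K. norm x \<le> B"
    using compact_imp_bounded bounded_iff by blast
  then have B: "\<forall>p\<in>K. norm (F p / G p) \<le> B" by simp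
  have "norm (F p) < (max B 0 + 1) * norm (G p)" if "p \<in> K" for p
  proof -
    have G: "norm (G p) > 0" using assms(4) that by simp
    have "norm (F p) = norm (F p / G p) * norm (G p)" using G by (simp add: norm_divide)
    also have "\<dots> \<le> max B 0 * norm (G p)" using B that G by (intro mult_right_mono) auto
    also have "\<dots> < (max B 0 + 1) * norm (G p)" using G by simp
    finally show ?thesis .
  qed
  then show thesis by (intro that[of "max B 0 + 1"]) auto
qed

lemma r_small_near_I3:
  assumes "\<epsilon> > 0"
  shows "\<exists>U :: okchart \<Rightarrow> ((complex \<times> complex) \<times> complex) set.
      (\<forall>c. open (U c) \<and> U c \<subseteq> okdom c \<times> (- {0}) \<and> I3_piece c \<times> (- {0}) \<subseteq> U c) \<and>
      (\<forall>c p z u v. (p, z) \<in> U c \<longrightarrow> chart_uv c p = Some (u, v) \<longrightarrow> BP_E u v \<noteq> 0 \<longrightarrow>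
          cmod (BP_r \<alpha> z u v) < \<epsilon>)"
proof -
  define U where "U c = okdom c \<times> (- {0}) \<inter>
    {(p, z). cmod (chart_N \<alpha> c p) < \<epsilon> * (6 * cmod z * cmod (chart_E c p))}" for c
  have "open (U c)" for c
    unfolding U_def case_prod_unfold
    by (intro open_Int open_Times open_okdom open_Compl closed_singleton open_Collect_less
        continuous_intros continuous_on_compose2[OF continuous_on_chart_N]
        continuous_on_compose2[OF continuous_on_chart_E]) auto
  moreover have "I3_piece c \<times> (- {0}) \<subseteq> U c" for c
  proof
    fix x :: "(complex \<times> complex) \<times> complex" assume "x \<in> I3_piece c \<times> (- {0})"
    then obtain p z where "x = (p, z)" "p \<in> I3_piece c" "z \<noteq> 0" by blast
    then show "x \<in> U c"
      using assms chart_on_I3_piece[where p = p and c = c] by (simp add: U_def)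
  qed
  moreover have "cmod (BP_r \<alpha> z u v) < \<epsilon>"
    if pz: "(p, z) \<in> U c" and uv: "chart_uv c p = Some (u, v)" and E: "BP_E u v \<noteq> 0"
    for c p z u v
  proof -
    have z: "z \<noteq> 0" and bound: "cmod (chart_N \<alpha> c p) < \<epsilon> * (6 * cmod z * cmod (chart_E c p))"
      using pz by (auto simp: U_def)
    have "BP_r \<alpha> z u v = chart_N \<alpha> c p / chart_E c p / (6 * z)"
      using BP_r_eq[OF z E] chart_ratio(2)[OF uv E, of \<alpha>] by (simp only:)
    then have "cmod (BP_r \<alpha> z u v) = cmod (chart_N \<alpha> c p) / (6 * cmod z * cmod (chart_E c p))"
      by (simp add: norm_divide norm_mult)
    also have "\<dots> < \<epsilon>"
      using bound z chart_ratio(1)[OF uv E] by (simp add: divide_less_eq)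
    finally show ?thesis .
  qed
  ultimately show ?thesis by (intro exI[of _ U]) (auto simp: U_def)
qed

lemma scaled_Edot_bounded_near:
  assumes "compact K" "K \<subseteq> okdom c" "\<forall>p\<in>K. chart_E c p \<noteq> 0"
  obtains V C where "open V" "V \<subseteq> okdom c" "K \<subseteq> V" "C > 0"
    "\<And>z u v. z \<noteq> 0 \<Longrightarrow> (u, v) \<in> gen_pts c V \<Longrightarrow>
       cmod (3 * z * BP_Edot \<alpha> z u v / (4 * BP_E u v)) \<le> C"
proof -
  obtain M where M: "M > 0" "\<forall>p\<in>K. cmod (chart_N \<alpha> c p) < M * cmod (chart_E c p)"
    using compact_norm_ratio_bound[OF assms(1) continuous_on_subset[OF continuous_on_chart_N]
        continuous_on_subset[OF continuous_on_chart_E] assms(3)] by blast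
  define V where "V = okdom c \<inter> {p. cmod (chart_N \<alpha> c p) < M * cmod (chart_E c p)}"
  have "open V"
    unfolding V_def
    by (intro open_Int open_okdom open_Collect_less continuous_intros continuous_on_chart_N
        continuous_on_chart_E)
  moreover have "cmod (3 * z * BP_Edot \<alpha> z u v / (4 * BP_E u v)) \<le> 1 + M / 8"
    if z: "z \<noteq> 0" and uv: "(u, v) \<in> gen_pts c V" for z u v
  proof -
    obtain p where p: "p \<in> V" "chart_uv c p = Some (u, v)" and E: "BP_E u v \<noteq> 0"
      using uv by (auto simp: gen_pts_def)
    have ratio: "cmod (chart_N \<alpha> c p / chart_E c p) \<le> M"
      using p(1) chart_ratio(1)[OF p(2) E] by (simp add: V_def norm_divide divide_le_eq)
    have "3 * z * BP_Edot \<alpha> z u v / (4 * BP_E u v) = -1 + chart_N \<alpha> c p / chart_E c p / 8"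
      using BP_Edot_scaled_eq[OF z E] chart_ratio(2)[OF p(2) E, of \<alpha>] by (simp only:)
    also have "cmod \<dots> \<le> 1 + cmod (chart_N \<alpha> c p / chart_E c p) / 8"
      using norm_triangle_ineq[of "-1" "chart_N \<alpha> c p / chart_E c p / 8"]
      by (simp add: norm_divide)
    finally show ?thesis using ratio by simp
  qed
  ultimately show thesis
    using M assms(2) by (intro that[of V "1 + M / 8"]) (auto simp: V_def)
qed

lemma scaled_Edot_bounded_near_L4_L7:
  assumes "compact K41" "K41 \<subseteq> - {-1/4}" "compact K42" "K42 \<subseteq> - {-4}" "compact K71"
  shows "\<exists>V41 V42 V71 (C::real).
          open V41 \<and> V41 \<subseteq> okdom C41 \<and> {(w,0) | w. w \<in> K41} \<subseteq> V41 \<and>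
          open V42 \<and> V42 \<subseteq> okdom C42 \<and> {(0,w) | w. w \<in> K42} \<subseteq> V42 \<and>
          open V71 \<and> V71 \<subseteq> okdom C71 \<and> {(w,0) | w. w \<in> K71} \<subseteq> V71 \<and>
          C > 0 \<and>
          (\<forall>z. z \<noteq> 0 \<longrightarrow>
             (\<forall>(u,v) \<in> gen_pts C41 V41 \<union> gen_pts C42 V42 \<union> gen_pts C71 V71.
                cmod (3*z*BP_Edot \<alpha> z u v / (4 * BP_E u v)) \<le> C))"
proof -
  have "chart_E C41 (w, 0) = 0 \<longleftrightarrow> w = -1/4" for w
    by (auto simp: field_simps add_eq_0_iff)
  with assms(2) have "\<forall>p \<in> K41 \<times> {0}. chart_E C41 p \<noteq> 0" "K41 \<times> {0} \<subseteq> okdom C41"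
    by auto
  with assms(1) obtain V41 C1
    where V41: "open V41" "V41 \<subseteq> okdom C41" "K41 \<times> {0} \<subseteq> V41" "C1 > 0"
      "\<And>z u v. z \<noteq> 0 \<Longrightarrow> (u, v) \<in> gen_pts C41 V41 \<Longrightarrow>
         cmod (3 * z * BP_Edot \<alpha> z u v / (4 * BP_E u v)) \<le> C1"
    by (metis scaled_Edot_bounded_near compact_Times compact_sing)
  have "chart_E C42 (0, w) = 0 \<longleftrightarrow> w = -4" for w
    by (auto simp: field_simps add_eq_0_iff2)
  with assms(4) have "\<forall>p \<in> {0} \<times> K42. chart_E C42 p \<noteq> 0" "{0} \<times> K42 \<subseteq> okdom C42"
    by auto
  with assms(3) obtain V42 C2
    where V42: "open V42" "V42 \<subseteq> okdom C42" "{0} \<times> K42 \<subseteq> V42" "C2 > 0"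
      "\<And>z u v. z \<noteq> 0 \<Longrightarrow> (u, v) \<in> gen_pts C42 V42 \<Longrightarrow>
         cmod (3 * z * BP_Edot \<alpha> z u v / (4 * BP_E u v)) \<le> C2"
    by (metis scaled_Edot_bounded_near compact_Times compact_sing)
  have "\<forall>p \<in> K71 \<times> {0}. chart_E C71 p \<noteq> 0" "K71 \<times> {0} \<subseteq> okdom C71"
    by auto
  with assms(5) obtain V71 C3
    where V71: "open V71" "V71 \<subseteq> okdom C71" "K71 \<times> {0} \<subseteq> V71" "C3 > 0"
      "\<And>z u v. z \<noteq> 0 \<Longrightarrow> (u, v) \<in> gen_pts C71 V71 \<Longrightarrow>
         cmod (3 * z * BP_Edot \<alpha> z u v / (4 * BP_E u v)) \<le> C3"
    by (metis scaled_Edot_bounded_near compact_Times compact_sing)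
  define C where "C = max C1 (max C2 C3)"
  have "cmod (3 * z * BP_Edot \<alpha> z u v / (4 * BP_E u v)) \<le> C"
    if "z \<noteq> 0" "(u, v) \<in> gen_pts C41 V41 \<union> gen_pts C42 V42 \<union> gen_pts C71 V71" for z u v
    using that V41(5) V42(5) V71(5) unfolding C_def by (meson UnE le_max_iff_disj)
  moreover have "C > 0" using V41(4) by (simp add: C_def)
  ultimately show ?thesis
    using V41(1-3) V42(1-3) V71(1-3)
    by (intro exI[of _ V41] exI[of _ V42] exI[of _ V71] exI[of _ C]) auto
qed

theorem lemma1:
  fixes \<alpha> :: complex
  shows
  "(\<forall>\<epsilon>>0. \<exists>U :: okchart \<Rightarrow> ((complex \<times> complex) \<times> complex) set.
      (\<forall>c. open (U c) \<and> U c \<subseteq> okdom c \<times> (- {0}) \<and> I3_piece c \<times> (- {0}) \<subseteq> U c) \<and>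
      (\<forall>c p z u v. (p, z) \<in> U c \<longrightarrow> chart_uv c p = Some (u, v) \<longrightarrow> BP_E u v \<noteq> 0 \<longrightarrow>
          cmod (BP_r \<alpha> z u v) < \<epsilon>))
   \<and>
   (\<forall>K41 K42 K71 :: complex set.
      compact K41 \<and> K41 \<subseteq> - {-1/4} \<and> compact K42 \<and> K42 \<subseteq> - {-4} \<and> compact K71 \<longrightarrow>
      (\<exists>V41 V42 V71 (C::real).
          open V41 \<and> V41 \<subseteq> okdom C41 \<and> {(w,0) | w. w \<in> K41} \<subseteq> V41 \<and>
          open V42 \<and> V42 \<subseteq> okdom C42 \<and> {(0,w) | w. w \<in> K42} \<subseteq> V42 \<and>
          open V71 \<and> V71 \<subseteq> okdom C71 \<and> {(w,0) | w. w \<in> K71} \<subseteq> V71 \<and>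
          C > 0 \<and>
          (\<forall>z. z \<noteq> 0 \<longrightarrow>
             (\<forall>(u,v) \<in> gen_pts C41 V41 \<union> gen_pts C42 V42 \<union> gen_pts C71 V71.
                cmod (3*z*BP_Edot \<alpha> z u v / (4 * BP_E u v)) \<le> C))))"
  by (intro conjI allI impI r_small_near_I3 scaled_Edot_bounded_near_L4_L7) auto

end
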